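(* Let $G$ be a finite simple group. Then for every positive integer $n$ divisible by $|G|^2$, there exists $s\in G\backslash\operatorname{Sur}_1(F_n,G)$ such that the image in $S_n$ of the stabilizer of $s$ in $B_n$ contains an $n$-cycle.
   Context: $\operatorname{Sur}_1(F_n,G)$ is the set of $(g_1,\dots,g_n)\in G^n$ with $\langle g_1,\dots,g_n\rangle=G$ and $g_1\cdots g_n=1$; $G\backslash\operatorname{Sur}_1(F_n,G)$ is its set of orbits under simultaneous conjugation $(g_i)\mapsto(gg_ig^{-1})$. $B_n$ acts on it from the right via $(\dots,g_i,g_{i+1},\dots)^{\sigma_i}=(\dots,g_{i+1},g_{i+1}^{-1}g_ig_{i+1},\dots)$, and $B_n\to S_n$ sends $\sigma_i\mapsto(i\ i+1)$. *)

theory Defs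
  imports "HOL-Algebra.SimpleGroups" "HOL-Algebra.Generated_Groups"
begin

text \<open>Tuples in G^n are lists of length n (0-indexed). The product g_1 ... g_n.\<close>
definition tuple_prod :: "('a, 'b) monoid_scheme \<Rightarrow> 'a list \<Rightarrow> 'a" where
  "tuple_prod G gs = foldr (\<lambda>x y. x \<otimes>\<^bsub>G\<^esub> y) gs \<one>\<^bsub>G\<^esub>"

definition Sur1 :: "('a, 'b) monoid_scheme \<Rightarrow> nat \<Rightarrow> 'a list set" where
  "Sur1 G n = {gs. length gs = n \<and> set gs \<subseteq> carrier G
      \<and> generate G (set gs) = carrier G \<and> tuple_prod G gs = \<one>\<^bsub>G\<^esub>}"

definition conj_orbit :: "('a, 'b) monoid_scheme \<Rightarrow> 'a list \<Rightarrow> 'a list set" where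
  "conj_orbit G gs = {map (\<lambda>x. h \<otimes>\<^bsub>G\<^esub> x \<otimes>\<^bsub>G\<^esub> inv\<^bsub>G\<^esub> h) gs | h. h \<in> carrier G}"

definition Sur1_quot :: "('a, 'b) monoid_scheme \<Rightarrow> nat \<Rightarrow> 'a list set set" where
  "Sur1_quot G n = conj_orbit G ` Sur1 G n"

text \<open>Braid words: a letter (i, True) stands for sigma_(i+1), (i, False) for its inverse
  (0-indexed). A word is a word in B_n if every letter has i + 1 < n.\<close>
type_synonym braid_word = "(nat \<times> bool) list"

definition braid_word_in :: "nat \<Rightarrow> braid_word \<Rightarrow> bool" where
  "braid_word_in n w \<longleftrightarrow> (\<forall>(i, b) \<in> set w. Suc i < n)"

definition braid_gen_act :: "('a, 'b) monoid_scheme \<Rightarrow> nat \<times> bool \<Rightarrow> 'a list \<Rightarrow> 'a list" where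
  "braid_gen_act G l gs = (case l of (i, b) \<Rightarrow>
     (if b then gs[i := gs ! Suc i,
                   Suc i := inv\<^bsub>G\<^esub> (gs ! Suc i) \<otimes>\<^bsub>G\<^esub> gs ! i \<otimes>\<^bsub>G\<^esub> gs ! Suc i]
      else gs[i := gs ! i \<otimes>\<^bsub>G\<^esub> gs ! Suc i \<otimes>\<^bsub>G\<^esub> inv\<^bsub>G\<^esub> (gs ! i),
              Suc i := gs ! i]))"

text \<open>Right action of a word: x^(w1 w2) = (x^w1)^w2, letters applied left to right.\<close>
definition braid_act :: "('a, 'b) monoid_scheme \<Rightarrow> braid_word \<Rightarrow> 'a list \<Rightarrow> 'a list" where
  "braid_act G w gs = fold (braid_gen_act G) w gs"

definition braid_act_orbit :: "('a, 'b) monoid_scheme \<Rightarrow> braid_word \<Rightarrow> 'a list set \<Rightarrow> 'a list set" where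
  "braid_act_orbit G w S = braid_act G w ` S"

definition braid_perm :: "braid_word \<Rightarrow> nat \<Rightarrow> nat" where
  "braid_perm w = foldr (\<lambda>(i, b) p. (\<lambda>x. if x = i then Suc i else if x = Suc i then i else x) \<circ> p) w id"

definition is_n_cycle :: "nat \<Rightarrow> (nat \<Rightarrow> nat) \<Rightarrow> bool" where
  "is_n_cycle n p \<longleftrightarrow> bij_betw p {0..<n} {0..<n} \<and> (\<forall>x. x \<ge> n \<longrightarrow> p x = x)
     \<and> 0 < n \<and> {(p ^^ k) 0 | k. True} = {0..<n}"

end

theory Submission
  imports Defs "HOL-Algebra.Multiplicative_Group" "HOL-Algebra.Group_Action"
    "HOL-Combinatorics.Transposition"
begin

text \<open>
  The image of the stabilizer of \<open>x\<close> in \<open>S\<^sub>n\<close> contains the rotation \<open>(0 1 \<dots> n-1)\<close> as soon as it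
  contains every adjacent transposition \<open>(k k+1)\<close>. Call \<open>i\<close> and \<open>j\<close> linked if \<open>(i j)\<close> is the
  image of a braid fixing \<open>x\<close>; this is an equivalence relation. It links \<open>i < j\<close> whenever
  \<open>x\<^sub>j = q\<^sup>-\<^sup>1 x\<^sub>i q\<close> for a product \<open>q\<close> of some of the entries strictly between them: carry \<open>x\<^sub>i\<close>
  to position \<open>j - 1\<close>, using \<open>\<sigma>\<^sub>k\<close> to conjugate by the entry it passes and \<open>\<sigma>\<^sub>k\<^sup>-\<^sup>1\<close> to pass it
  unchanged; now the entries at \<open>j - 1\<close> and \<open>j\<close> agree, so the generator at \<open>j - 1\<close> fixes
  the tuple; finally undo the carrying. The permutation of this braid is a conjugate of \<open>(j-1 j)\<close>, namely \<open>(i j)\<close>.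

  For \<open>G\<close> simple pick \<open>a \<noteq> \<one>\<close>; its conjugacy class \<open>C\<close> generates \<open>G\<close>. Run twice through \<open>C\<close>,
  pad with copies of \<open>a\<close>, and repeat every entry \<open>ord a\<close> times. The product is \<open>\<one>\<close>, and for
  \<open>c, d \<in> C\<close> some block of \<open>d\<close>'s lies between a block of \<open>c\<close>'s and a block of \<open>d\<^sup>-\<^sup>1 c d\<close>'s,
  in one order or the other (for the reverse order use \<open>d [^] (ord a - 1) = inv d\<close>). As \<open>C\<close> is a
  single conjugacy class generating \<open>G\<close>, any two entries are then linked. The tuple fits into length \<open>n\<close> because
  \<open>|C| \<cdot> ord a \<le> |G|\<close> by the orbit-stabilizer theorem, so \<open>2 |C| ord a \<le> 2 |G| \<le> |G|\<^sup>2 \<le> n\<close>.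
\<close>

section \<open>Braid words and their permutations\<close>

definition braid_word_inv :: "braid_word \<Rightarrow> braid_word" where
  "braid_word_inv w = rev (map (\<lambda>(i, b). (i, \<not> b)) w)"

lemma braid_perm_Nil [simp]: "braid_perm [] = id"
  by (simp add: braid_perm_def)

lemma braid_perm_Cons [simp]: "braid_perm ((i, b) # w) = transpose i (Suc i) \<circ> braid_perm w"
  by (simp add: braid_perm_def transpose_def fun_eq_iff)

lemma braid_perm_append: "braid_perm (w1 @ w2) = braid_perm w1 \<circ> braid_perm w2"
  by (induction w1) (auto simp: o_assoc)

lemma braid_perm_braid_word_inv: "braid_perm w \<circ> braid_perm (braid_word_inv w) = id"
proof (induction w)
  case (Cons l w)
  obtain i b where l: "l = (i, b)" by fastforce
  have "braid_perm (l # w) \<circ> braid_perm (braid_word_inv (l # w))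
      = transpose i (Suc i) \<circ> (braid_perm w \<circ> braid_perm (braid_word_inv w)) \<circ> transpose i (Suc i)"
    by (simp add: l braid_word_inv_def braid_perm_append comp_assoc)
  also have "\<dots> = id"
    by (simp only: Cons.IH comp_id transpose_comp_involutory)
  finally show ?case .
qed (simp add: braid_word_inv_def)

lemma bij_braid_perm: "bij (braid_perm w)"
proof (induction w)
  case (Cons l w)
  then show ?case by (cases l) (metis braid_perm_Cons bij_comp bij_transpose)
qed (simp only: braid_perm_Nil bij_id)

lemma braid_perm_shift_word:
  assumes "i \<le> l"
  shows "braid_perm (map (\<lambda>k. (k, P k)) [i..<l])
           = (\<lambda>y. if i \<le> y \<and> y < l then Suc y else if y = l then i else y)"
  using assms
proof (induction l)
  case (Suc l)
  show ?case
  proof (cases "i = Suc l")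
    case False
    with Suc.prems have il: "i \<le> l" by simp
    with Suc.IH have "braid_perm (map (\<lambda>k. (k, P k)) [i..<Suc l])
        = (\<lambda>y. if i \<le> y \<and> y < l then Suc y else if y = l then i else y) \<circ> transpose l (Suc l)"
      by (simp add: braid_perm_append)
    with il show ?thesis
      by (auto simp: fun_eq_iff transpose_def)
  qed (auto simp: fun_eq_iff)
qed (auto simp: fun_eq_iff)

lemma braid_perm_shift_word_conj:
  fixes P :: "nat \<Rightarrow> bool" and i l :: nat
  assumes "i \<le> l"
  defines "u \<equiv> map (\<lambda>k. (k, P k)) [i..<l]"
  shows "braid_perm (u @ [(l, b)] @ braid_word_inv u) = transpose i (Suc l)"
proof -
  define \<pi> where "\<pi> = braid_perm u"
  have \<pi>: "\<pi> l = i" "\<pi> (Suc l) = Suc l"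
    using assms by (simp_all add: \<pi>_def u_def braid_perm_shift_word)
  have "bij \<pi>"
    unfolding \<pi>_def by (rule bij_braid_perm)
  then have "transpose i (Suc l) \<circ> \<pi> = \<pi> \<circ> transpose l (Suc l)"
    using \<pi> by (simp add: transpose_comp_eq bij_is_inj inv_f_eq)
  then show ?thesis
    using braid_perm_braid_word_inv[of u]
    by (simp add: braid_perm_append flip: \<pi>_def) (metis comp_assoc comp_id)
qed

lemma braid_act_Nil [simp]: "braid_act G [] x = x"
  by (simp add: braid_act_def)

lemma braid_act_Cons [simp]: "braid_act G (l # w) x = braid_act G w (braid_gen_act G l x)"
  by (simp add: braid_act_def)

lemma braid_act_append: "braid_act G (w1 @ w2) x = braid_act G w2 (braid_act G w1 x)"
  by (simp add: braid_act_def)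

lemma braid_word_in_Nil [simp]: "braid_word_in n []"
  by (simp add: braid_word_in_def)

lemma braid_word_in_Cons [simp]: "braid_word_in n ((i, b) # w) \<longleftrightarrow> Suc i < n \<and> braid_word_in n w"
  by (auto simp: braid_word_in_def)

lemma braid_word_in_append [simp]:
  "braid_word_in n (w1 @ w2) \<longleftrightarrow> braid_word_in n w1 \<and> braid_word_in n w2"
  by (auto simp: braid_word_in_def)

lemma braid_word_in_braid_word_inv [simp]: "braid_word_in n (braid_word_inv w) \<longleftrightarrow> braid_word_in n w"
  by (auto simp: braid_word_in_def braid_word_inv_def)

section \<open>The Hurwitz action on tuples\<close>

lemma tuple_prod_Nil [simp]: "tuple_prod G [] = \<one>\<^bsub>G\<^esub>"
  by (simp add: tuple_prod_def)

lemma tuple_prod_Cons [simp]: "tuple_prod G (a # x) = a \<otimes>\<^bsub>G\<^esub> tuple_prod G x"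
  by (simp add: tuple_prod_def)

context group
begin

lemma inv_mult_cancel_left [simp]: "x \<in> carrier G \<Longrightarrow> y \<in> carrier G \<Longrightarrow> inv x \<otimes> (x \<otimes> y) = y"
  by (simp add: m_assoc[symmetric])

lemma mult_inv_cancel_left [simp]: "x \<in> carrier G \<Longrightarrow> y \<in> carrier G \<Longrightarrow> x \<otimes> (inv x \<otimes> y) = y"
  by (simp add: m_assoc[symmetric])

lemma tuple_prod_closed [simp]: "set x \<subseteq> carrier G \<Longrightarrow> tuple_prod G x \<in> carrier G"
  by (induction x) auto

lemma tuple_prod_append:
  "set x \<subseteq> carrier G \<Longrightarrow> set y \<subseteq> carrier G \<Longrightarrow> tuple_prod G (x @ y) = tuple_prod G x \<otimes> tuple_prod G y"
  by (induction x) (auto simp: m_assoc)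

lemma tuple_prod_replicate: "c \<in> carrier G \<Longrightarrow> tuple_prod G (replicate k c) = c [^] k"
proof (induction k)
  case (Suc k)
  then show ?case using nat_pow_Suc2[of c k] by simp
qed simp

lemma length_braid_gen_act [simp]: "length (braid_gen_act G l x) = length x"
  by (cases l) (simp add: braid_gen_act_def)

lemma length_braid_act [simp]: "length (braid_act G w x) = length x"
  by (induction w arbitrary: x) auto

lemma braid_gen_act_closed:
  assumes "set x \<subseteq> carrier G" "Suc i < length x"
  shows "set (braid_gen_act G (i, b) x) \<subseteq> carrier G"
proof -
  have "x ! i \<in> carrier G" "x ! Suc i \<in> carrier G"
    using assms by (auto dest: nth_mem)
  with assms show ?thesis
    unfolding braid_gen_act_def by (cases b) (simp_all add: set_update_subsetI)
qed

lemma braid_act_closed: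
  "braid_word_in (length x) w \<Longrightarrow> set x \<subseteq> carrier G \<Longrightarrow> set (braid_act G w x) \<subseteq> carrier G"
proof (induction w arbitrary: x)
  case (Cons l w)
  then show ?case by (cases l) (simp add: braid_gen_act_closed)
qed simp

lemma braid_gen_act_eq_self:
  assumes "set x \<subseteq> carrier G" "Suc i < length x" "x ! i = x ! Suc i"
  shows "braid_gen_act G (i, b) x = x"
proof -
  have "x ! Suc i \<in> carrier G" using assms by (auto dest: nth_mem)
  moreover have "x[i := x ! Suc i, Suc i := x ! Suc i] = x"
    using assms(3) by (metis list_update_id)
  ultimately show ?thesis
    using assms(3) by (cases b) (simp_all add: braid_gen_act_def m_assoc)
qed

lemma braid_gen_act_inverse:
  assumes "set x \<subseteq> carrier G" "Suc i < length x"
  shows "braid_gen_act G (i, \<not> b) (braid_gen_act G (i, b) x) = x"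
proof -
  have "x ! i \<in> carrier G" "x ! Suc i \<in> carrier G"
    using assms by (auto dest: nth_mem)
  with assms show ?thesis
    by (cases b) (auto intro!: nth_equalityI simp: braid_gen_act_def nth_list_update m_assoc)
qed

lemma braid_act_braid_word_inv:
  "braid_word_in (length x) w \<Longrightarrow> set x \<subseteq> carrier G \<Longrightarrow> braid_act G (braid_word_inv w) (braid_act G w x) = x"
proof (induction w arbitrary: x)
  case (Cons l w)
  obtain i b where l: "l = (i, b)" by fastforce
  have "braid_act G (braid_word_inv (l # w)) (braid_act G (l # w) x)
      = braid_gen_act G (i, \<not> b) (braid_act G (braid_word_inv w) (braid_act G w (braid_gen_act G (i, b) x)))"
    by (simp add: l braid_word_inv_def braid_act_append)
  also have "\<dots> = x"
    using Cons by (simp add: l braid_gen_act_closed braid_gen_act_inverse)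
  finally show ?case .
qed (simp add: braid_word_inv_def)

lemma braid_gen_act_conj:
  assumes "set x \<subseteq> carrier G" "Suc i < length x" "h \<in> carrier G"
  shows "braid_gen_act G (i, b) (map (\<lambda>y. h \<otimes> y \<otimes> inv h) x)
       = map (\<lambda>y. h \<otimes> y \<otimes> inv h) (braid_gen_act G (i, b) x)"
proof -
  define c where "c = (\<lambda>y. h \<otimes> y \<otimes> inv h)"
  have c_mult: "c y \<otimes> c z = c (y \<otimes> z)" if "y \<in> carrier G" "z \<in> carrier G" for y z
    using that assms(3) by (simp add: c_def m_assoc)
  have c_inv: "inv (c y) = c (inv y)" if "y \<in> carrier G" for y
    using that assms(3) by (simp add: c_def m_assoc inv_mult_group)
  have "x ! i \<in> carrier G" "x ! Suc i \<in> carrier G"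
    using assms by (auto dest: nth_mem)
  with assms have "braid_gen_act G (i, b) (map c x) = map c (braid_gen_act G (i, b) x)"
    by (cases b) (auto intro!: nth_equalityI simp: braid_gen_act_def nth_list_update c_mult c_inv)
  then show ?thesis by (simp only: c_def)
qed

lemma braid_act_conj:
  "braid_word_in (length x) w \<Longrightarrow> set x \<subseteq> carrier G \<Longrightarrow> h \<in> carrier G \<Longrightarrow>
   braid_act G w (map (\<lambda>y. h \<otimes> y \<otimes> inv h) x) = map (\<lambda>y. h \<otimes> y \<otimes> inv h) (braid_act G w x)"
proof (induction w arbitrary: x)
  case (Cons l w)
  then show ?case by (cases l) (simp add: braid_gen_act_closed braid_gen_act_conj)
qed simp

end

lemma braid_act_orbit_conj_orbit:
  assumes "group G" "braid_word_in (length x) w" "set x \<subseteq> carrier G" "braid_act G w x = x"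
  shows "braid_act_orbit G w (conj_orbit G x) = conj_orbit G x"
proof -
  have "braid_act G w y = y" if "y \<in> conj_orbit G x" for y
    using that assms group.braid_act_conj[OF assms(1)] by (auto simp: conj_orbit_def)
  then show ?thesis
    unfolding braid_act_orbit_def by force
qed

section \<open>Transpositions in the stabilizer\<close>

definition stabilizer_transposes :: "('a, 'b) monoid_scheme \<Rightarrow> nat \<Rightarrow> 'a list \<Rightarrow> nat \<Rightarrow> nat \<Rightarrow> bool" where
  "stabilizer_transposes G n x i j \<longleftrightarrow> i < n \<and> j < n \<and>
     (\<exists>w. braid_word_in n w \<and> braid_act G w x = x \<and> braid_perm w = transpose i j)"

lemma stabilizer_transposes_refl: "i < n \<Longrightarrow> stabilizer_transposes G n x i i"
  unfolding stabilizer_transposes_def by (auto intro: exI[of _ "[]"])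

lemma stabilizer_transposes_sym: "stabilizer_transposes G n x i j \<Longrightarrow> stabilizer_transposes G n x j i"
  unfolding stabilizer_transposes_def by (metis transpose_commute)

lemma stabilizer_transposes_trans:
  assumes ij: "stabilizer_transposes G n x i j" and jk: "stabilizer_transposes G n x j k"
  shows "stabilizer_transposes G n x i k"
proof (cases "i = j \<or> j = k \<or> i = k")
  case True
  with assms show ?thesis
    by (metis stabilizer_transposes_def stabilizer_transposes_refl)
next
  case False
  obtain w1 where w1: "braid_word_in n w1" "braid_act G w1 x = x" "braid_perm w1 = transpose i j"
    using ij unfolding stabilizer_transposes_def by blast
  obtain w2 where w2: "braid_word_in n w2" "braid_act G w2 x = x" "braid_perm w2 = transpose j k"
    using jk unfolding stabilizer_transposes_def by blast
  have "braid_perm (w1 @ w2 @ w1) = transpose i k"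
    using w1 w2 False by (simp add: braid_perm_append transpose_comp_triple flip: comp_assoc)
  moreover have "braid_act G (w1 @ w2 @ w1) x = x"
    using w1 w2 by (simp add: braid_act_append)
  ultimately show ?thesis
    using ij jk w1 w2 unfolding stabilizer_transposes_def by (metis braid_word_in_append)
qed

lemma nth_braid_act_shift_word_beyond:
  "l < m \<Longrightarrow> braid_act G (map (\<lambda>k. (k, P k)) [i..<l]) x ! m = x ! m"
proof (induction l)
  case (Suc l)
  then show ?case
    by (cases "P l") (auto simp: braid_act_append braid_gen_act_def nth_list_update)
qed simp

lemma map_nth_Suc_filter_block:
  assumes "i < s" "s + t \<le> Suc l" and block: "\<And>m. s \<le> m \<Longrightarrow> m < s + t \<Longrightarrow> x ! m = d"
  shows "map (\<lambda>k. x ! Suc k) (filter (\<lambda>k. s \<le> Suc k \<and> Suc k < s + t) [i..<l]) = replicate t d"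
    (is "map _ (filter ?P _) = _")
proof -
  have "[i..<l] = [i..<s - 1] @ [s - 1..<s - 1 + t] @ [s - 1 + t..<l]"
    using assms(1,2) upt_add_eq_append[of i "s - 1" "l - (s - 1)"]
      upt_add_eq_append[of "s - 1" "s - 1 + t" "l - (s - 1 + t)"]
    by simp
  moreover have "filter ?P [i..<s - 1] = []" "filter ?P [s - 1 + t..<l] = []"
    by (auto simp: filter_empty_conv)
  moreover have "filter ?P [s - 1..<s - 1 + t] = [s - 1..<s - 1 + t]"
    using assms(1) by (auto intro!: filter_True)
  ultimately have "map (\<lambda>k. x ! Suc k) (filter ?P [i..<l]) = map (\<lambda>_. d) [s - 1..<s - 1 + t]"
    using assms(1) block by (auto intro!: map_cong)
  then show ?thesis
    by (simp add: map_replicate_const)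
qed

context group
begin

lemma nth_braid_act_shift_word:
  fixes x :: "'a list" and P :: "nat \<Rightarrow> bool" and i l :: nat
  defines "q \<equiv> tuple_prod G (map (\<lambda>k. x ! Suc k) (filter P [i..<l]))"
  assumes "set x \<subseteq> carrier G" "l < length x" "i \<le> l"
  shows "braid_act G (map (\<lambda>k. (k, P k)) [i..<l]) x ! l = inv q \<otimes> x ! i \<otimes> q"
  unfolding q_def using assms(2-4)
proof (induction l)
  case (Suc l)
  show ?case
  proof (cases "i = Suc l")
    case False
    with Suc.prems have il: "i \<le> l" by simp
    have xc: "\<And>k. k < length x \<Longrightarrow> x ! k \<in> carrier G"
      using Suc.prems(1) by (auto dest: nth_mem)
    define q0 where "q0 = tuple_prod G (map (\<lambda>k. x ! Suc k) (filter P [i..<l]))"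
    define y where "y = braid_act G (map (\<lambda>k. (k, P k)) [i..<l]) x"
    have q0c: "q0 \<in> carrier G"
      unfolding q0_def using Suc.prems(2) by (auto intro!: tuple_prod_closed xc)
    have yl: "y ! l = inv q0 \<otimes> x ! i \<otimes> q0"
      using Suc il unfolding y_def q0_def by simp
    have ySl: "y ! Suc l = x ! Suc l"
      unfolding y_def by (rule nth_braid_act_shift_word_beyond) simp
    have "set (map (\<lambda>k. x ! Suc k) (filter P [i..<l])) \<subseteq> carrier G"
      using Suc.prems(2) by (auto intro: xc)
    then have q: "tuple_prod G (map (\<lambda>k. x ! Suc k) (filter P [i..<Suc l]))
        = q0 \<otimes> (if P l then x ! Suc l else \<one>)"
      using Suc.prems(2) il xc by (simp add: q0_def tuple_prod_append)
    have "braid_act G (map (\<lambda>k. (k, P k)) [i..<Suc l]) x ! Suc l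
        = (if P l then inv (x ! Suc l) \<otimes> y ! l \<otimes> x ! Suc l else y ! l)"
      using il Suc.prems(2) ySl by (simp add: y_def braid_act_append braid_gen_act_def)
    also have "\<dots> = inv (q0 \<otimes> (if P l then x ! Suc l else \<one>)) \<otimes> x ! i
        \<otimes> (q0 \<otimes> (if P l then x ! Suc l else \<one>))"
      using q0c xc[of i] xc[of "Suc l"] Suc.prems(2,3) il
      by (simp add: yl m_assoc inv_mult_group)
    finally show ?thesis unfolding q .
  qed (use Suc.prems in \<open>auto dest: nth_mem\<close>)
next
  case 0
  then have "x ! 0 \<in> carrier G" by (metis nth_mem subsetD)
  with 0 show ?case by simp
qed

lemma stabilizer_transposes_conj_by_block:
  assumes x: "length x = n" "set x \<subseteq> carrier G"
    and ij: "i < s" "s + t \<le> j" "j < n"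
    and d: "d \<in> carrier G" "\<And>m. s \<le> m \<Longrightarrow> m < s + t \<Longrightarrow> x ! m = d"
    and xj: "x ! j = inv (d [^] t) \<otimes> x ! i \<otimes> d [^] t"
  shows "stabilizer_transposes G n x i j"
proof -
  define l where "l = j - 1"
  define P where "P k \<longleftrightarrow> s \<le> Suc k \<and> Suc k < s + t" for k
  define u where "u = map (\<lambda>k. (k, P k)) [i..<l]"
  define y where "y = braid_act G u x"
  have jl: "j = Suc l" and il: "i \<le> l" and ln: "l < n"
    using ij by (auto simp: l_def)
  have "map (\<lambda>k. x ! Suc k) (filter P [i..<l]) = replicate t d"
    unfolding P_def using ij d(2) jl by (intro map_nth_Suc_filter_block) auto
  then have "y ! l = x ! j"
    using nth_braid_act_shift_word[OF x(2), of l i P] x il ln xj d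
    by (simp add: y_def u_def tuple_prod_replicate)
  moreover have "y ! j = x ! j"
    unfolding y_def u_def jl by (rule nth_braid_act_shift_word_beyond) simp
  moreover have bu: "braid_word_in n u"
    using ij by (auto simp: u_def braid_word_in_def l_def)
  ultimately have "braid_gen_act G (l, True) y = y"
    using x ij braid_act_closed[OF _ x(2), of u]
    by (intro braid_gen_act_eq_self) (auto simp: y_def jl)
  then have "braid_act G (u @ [(l, True)] @ braid_word_inv u) x = x"
    using braid_act_braid_word_inv[of x u] bu x by (simp add: braid_act_append y_def)
  moreover have "braid_perm (u @ [(l, True)] @ braid_word_inv u) = transpose i j"
    unfolding u_def jl using il by (rule braid_perm_shift_word_conj)
  ultimately show ?thesis
    using bu ij unfolding stabilizer_transposes_def
    by (intro conjI exI[of _ "u @ [(l, True)] @ braid_word_inv u"]) (auto simp: l_def)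
qed

lemma stabilizer_transposes_nth_eq:
  assumes "length x = n" "set x \<subseteq> carrier G" "i < n" "j < n" "x ! i = x ! j"
  shows "stabilizer_transposes G n x i j"
proof -
  have "stabilizer_transposes G n x i j" if "i < j" "j < n" "x ! i = x ! j" for i j
  proof -
    have "x ! j \<in> carrier G"
      using that assms(1,2) by (auto dest: nth_mem)
    with that show ?thesis
      using stabilizer_transposes_conj_by_block[OF assms(1,2), of i "Suc i" 0 j \<one>] by simp
  qed
  with assms show ?thesis
    by (metis linorder_neqE_nat stabilizer_transposes_refl stabilizer_transposes_sym)
qed

end

lemma is_n_cycle_rotation:
  assumes "0 < n"
  shows "is_n_cycle n (\<lambda>y. if y < n - 1 then Suc y else if y = n - 1 then 0 else y)"
    (is "is_n_cycle n ?p")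
proof -
  have iter: "(?p ^^ k) 0 = k" if "k < n" for k
    using that by (induction k) auto
  have bound: "(?p ^^ k) 0 < n" for k
    using assms by (induction k) auto
  have orbit: "{(?p ^^ k) 0 | k. True} = {0..<n}"
  proof (intro equalityI subsetI)
    fix y assume "y \<in> {0..<n}"
    then have "(?p ^^ y) 0 = y"
      by (intro iter) simp
    then show "y \<in> {(?p ^^ k) 0 | k. True}"
      by (metis (mono_tags, lifting) mem_Collect_eq)
  qed (use bound in auto)
  have onto: "{0..<n} \<subseteq> ?p ` {0..<n}"
  proof
    fix y assume "y \<in> {0..<n}"
    then show "y \<in> ?p ` {0..<n}"
      using assms by (cases y) (auto intro!: image_eqI[of _ _ "y - 1"] image_eqI[of _ _ "n - 1"])
  qed
  moreover have "?p ` {0..<n} \<subseteq> {0..<n}"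
    by auto
  ultimately have "bij_betw ?p {0..<n} {0..<n}"
    by (intro bij_betw_imageI finite_surj_inj) auto
  with orbit assms show ?thesis
    unfolding is_n_cycle_def by auto
qed

lemma braid_stabilizer_has_n_cycle:
  assumes "0 < n" and adjacent: "\<And>k. Suc k < n \<Longrightarrow> stabilizer_transposes G n x k (Suc k)"
  shows "\<exists>w. braid_word_in n w \<and> braid_act G w x = x \<and> is_n_cycle n (braid_perm w)"
proof -
  obtain W where W: "\<And>k. Suc k < n \<Longrightarrow>
      braid_word_in n (W k) \<and> braid_act G (W k) x = x \<and> braid_perm (W k) = transpose k (Suc k)"
    using adjacent unfolding stabilizer_transposes_def by metis
  have prefix: "braid_word_in n (concat (map W [0..<l])) \<and> braid_act G (concat (map W [0..<l])) x = x
      \<and> braid_perm (concat (map W [0..<l])) = braid_perm (map (\<lambda>k. (k, True)) [0..<l])"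
    if "l \<le> n - 1" for l
    using that by (induction l) (auto simp: W braid_perm_append braid_act_append)
  have "braid_perm (map (\<lambda>k. (k, True)) [0..<n - 1])
      = (\<lambda>y. if y < n - 1 then Suc y else if y = n - 1 then 0 else y)"
    by (auto simp: braid_perm_shift_word fun_eq_iff)
  with prefix[of "n - 1"] is_n_cycle_rotation[OF assms(1)] show ?thesis
    by (intro exI[of _ "concat (map W [0..<n - 1])"]) auto
qed

section \<open>Conjugacy classes\<close>

context group
begin

definition conj_class :: "'a \<Rightarrow> 'a set" where
  "conj_class a = {g \<otimes> a \<otimes> inv g | g. g \<in> carrier G}"

lemma conj_class_subset: "a \<in> carrier G \<Longrightarrow> conj_class a \<subseteq> carrier G"
  by (auto simp: conj_class_def)

lemma self_in_conj_class: "a \<in> carrier G \<Longrightarrow> a \<in> conj_class a"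
  unfolding conj_class_def by (force intro: exI[of _ \<one>])

lemma conj_in_conj_class:
  assumes "a \<in> carrier G" "c \<in> conj_class a" "g \<in> carrier G"
  shows "g \<otimes> c \<otimes> inv g \<in> conj_class a"
proof -
  obtain h where h: "h \<in> carrier G" "c = h \<otimes> a \<otimes> inv h"
    using assms(2) by (auto simp: conj_class_def)
  then have "g \<otimes> c \<otimes> inv g = (g \<otimes> h) \<otimes> a \<otimes> inv (g \<otimes> h)"
    using assms by (simp add: m_assoc inv_mult_group)
  with h assms show ?thesis
    unfolding conj_class_def by blast
qed

lemma conj_class_conjugate:
  assumes "a \<in> carrier G" "c \<in> conj_class a" "c' \<in> conj_class a"
  shows "\<exists>g \<in> carrier G. c' = inv g \<otimes> c \<otimes> g"
proof -
  obtain h h' where "h \<in> carrier G" "c = h \<otimes> a \<otimes> inv h" "h' \<in> carrier G" "c' = h' \<otimes> a \<otimes> inv h'"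
    using assms by (auto simp: conj_class_def)
  then have "c' = inv (h \<otimes> inv h') \<otimes> c \<otimes> (h \<otimes> inv h')" "h \<otimes> inv h' \<in> carrier G"
    using assms(1) by (simp_all add: m_assoc inv_mult_group)
  then show ?thesis by blast
qed

lemma pow_ord_conj_class:
  assumes "a \<in> carrier G" "c \<in> conj_class a"
  shows "c [^] ord a = \<one>"
proof -
  obtain g where g: "g \<in> carrier G" "c = g \<otimes> a \<otimes> inv g"
    using assms(2) by (auto simp: conj_class_def)
  have "(g \<otimes> a \<otimes> inv g) [^] k = g \<otimes> a [^] k \<otimes> inv g" for k :: nat
    using g assms(1) by (induction k) (simp_all add: m_assoc)
  with g assms(1) show ?thesis by simp
qed

lemma card_conj_class_mult_ord_le:
  assumes fin: "finite (carrier G)" and a: "a \<in> carrier G"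
  shows "card (conj_class a) * ord a \<le> order G"
proof -
  define \<phi> where "\<phi> g = (\<lambda>h \<in> carrier G. g \<otimes> h \<otimes> inv g)" for g
  interpret conj: group_action G "carrier G" \<phi>
    unfolding \<phi>_def by (rule action_by_conjugation)
  have orbit: "orbit G \<phi> a = conj_class a"
    using a by (auto simp: orbit_def conj_class_def \<phi>_def)
  have "generate G {a} \<subseteq> stabilizer G \<phi> a"
    using a by (intro generate_subgroup_incl conj.stabilizer_subgroup)
      (auto simp: stabilizer_def \<phi>_def m_assoc)
  then have "ord a \<le> card (stabilizer G \<phi> a)"
    using fin a by (simp add: generate_pow_card card_mono stabilizer_def)
  then have "card (conj_class a) * ord a \<le> card (orbit G \<phi> a) * card (stabilizer G \<phi> a)"
    by (simp add: orbit)
  also have "\<dots> = order G"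
    using a by (rule conj.orbit_stabilizer_theorem)
  finally show ?thesis .
qed

lemma related_conj_generate:
  assumes S: "S \<subseteq> carrier G" and closed: "\<And>g c. g \<in> carrier G \<Longrightarrow> c \<in> S \<Longrightarrow> g \<otimes> c \<otimes> inv g \<in> S"
    and R: "symp R" "transp R"
    and step: "\<And>c d. c \<in> S \<Longrightarrow> d \<in> S \<Longrightarrow> R c (inv d \<otimes> c \<otimes> d)"
    and g: "g \<in> generate G S" and c: "c \<in> S"
  shows "R c (inv g \<otimes> c \<otimes> g)"
  using g c
proof (induction arbitrary: c rule: generate.induct)
  case one
  \<comment> \<open>no reflexivity hypothesis is needed: take \<open>d = c\<close> in \<open>step\<close>\<close>
  with S step[of c c] show ?case by (auto simp: m_assoc)
next
  case (incl d)
  then show ?case by (intro step)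
next
  case (inv d)
  then have dc: "d \<in> carrier G" "c \<in> carrier G" using S by auto
  have "R (d \<otimes> c \<otimes> inv d) (inv d \<otimes> (d \<otimes> c \<otimes> inv d) \<otimes> d)"
    using inv dc closed by (intro step) auto
  with dc R(1) show ?case by (simp add: m_assoc symp_def)
next
  case (eng g1 g2)
  then have gc: "g1 \<in> carrier G" "g2 \<in> carrier G" "c \<in> carrier G"
    using S generate_in_carrier by auto
  have c1: "inv g1 \<otimes> c \<otimes> g1 \<in> S"
    using eng closed[of "inv g1" c] gc by simp
  have "R c (inv g1 \<otimes> c \<otimes> g1)"
    using eng by blast
  moreover have "R (inv g1 \<otimes> c \<otimes> g1) (inv g2 \<otimes> (inv g1 \<otimes> c \<otimes> g1) \<otimes> g2)"
    using c1 by (rule eng.IH(2))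
  ultimately have "R c (inv g2 \<otimes> (inv g1 \<otimes> c \<otimes> g1) \<otimes> g2)"
    by (rule transpD[OF R(2)])
  moreover have "inv g2 \<otimes> (inv g1 \<otimes> c \<otimes> g1) \<otimes> g2 = inv (g1 \<otimes> g2) \<otimes> c \<otimes> (g1 \<otimes> g2)"
    using gc by (simp add: m_assoc inv_mult_group)
  ultimately show ?case by simp
qed

lemma stabilizer_transposes_all_if_conj_steps:
  assumes x: "length x = n" "set x = conj_class a" and a: "a \<in> carrier G"
    and gen: "generate G (conj_class a) = carrier G"
    and step: "\<And>c d. c \<in> set x \<Longrightarrow> d \<in> set x \<Longrightarrow>
      \<exists>p p'. x ! p = c \<and> x ! p' = inv d \<otimes> c \<otimes> d \<and> stabilizer_transposes G n x p p'"
    and ij: "i < n" "j < n"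
  shows "stabilizer_transposes G n x i j"
proof -
  have xc: "set x \<subseteq> carrier G"
    using x a conj_class_subset by simp
  have nth_eq: "stabilizer_transposes G n x p q" if "p < n" "q < n" "x ! p = x ! q" for p q
    using stabilizer_transposes_nth_eq x(1) xc that by blast
  define R where "R c c' \<longleftrightarrow> (\<exists>p p'. x ! p = c \<and> x ! p' = c' \<and> stabilizer_transposes G n x p p')"
    for c c'
  have symp: "symp R"
    unfolding R_def symp_def using stabilizer_transposes_sym by blast
  have transp: "transp R"
  proof (rule transpI)
    fix c c' c'' assume "R c c'" "R c' c''"
    then obtain p p' q q' where pp': "x ! p = c" "x ! p' = c'" "stabilizer_transposes G n x p p'"
      and qq': "x ! q = c'" "x ! q' = c''" "stabilizer_transposes G n x q q'"
      unfolding R_def by blast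
    then have "stabilizer_transposes G n x p' q"
      using nth_eq unfolding stabilizer_transposes_def by simp
    with pp' qq' show "R c c''"
      unfolding R_def by (blast intro: stabilizer_transposes_trans)
  qed
  have step_R: "R c (inv d \<otimes> c \<otimes> d)" if "c \<in> conj_class a" "d \<in> conj_class a" for c d
    using step that unfolding R_def x(2) by blast
  have xij: "x ! i \<in> conj_class a" "x ! j \<in> conj_class a"
    using ij x by (auto simp flip: x(2))
  obtain g where g: "g \<in> carrier G" "x ! j = inv g \<otimes> x ! i \<otimes> g"
    using conj_class_conjugate[OF a xij] by blast
  have "R (x ! i) (inv g \<otimes> x ! i \<otimes> g)"
    using g gen xij
    by (intro related_conj_generate[OF conj_class_subset[OF a] conj_in_conj_class[OF a] symp transp step_R])
      simp_all
  then have "R (x ! i) (x ! j)"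
    using g(2) by simp
  then obtain p p' where pp': "x ! p = x ! i" "x ! p' = x ! j" "stabilizer_transposes G n x p p'"
    unfolding R_def by blast
  then have "stabilizer_transposes G n x i p" "stabilizer_transposes G n x p' j"
    using ij nth_eq unfolding stabilizer_transposes_def by auto
  with pp'(3) show ?thesis
    by (blast intro: stabilizer_transposes_trans)
qed

end

context simple_group
begin

lemma generate_conj_class:
  assumes "a \<in> carrier G" "a \<noteq> \<one>"
  shows "generate G (conj_class a) = carrier G"
proof -
  have "generate G (conj_class a) \<lhd> G"
    using assms by (intro normal_generateI conj_class_subset) (auto intro: conj_in_conj_class)
  moreover have "a \<in> generate G (conj_class a)"
    using assms by (intro generate.incl self_in_conj_class)
  ultimately show ?thesis
    using assms no_real_normal_subgroup by blast
qed

end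

section \<open>The witness tuple\<close>

definition block_tuple :: "nat \<Rightarrow> 'a list \<Rightarrow> 'a list" where
  "block_tuple e cs = concat (map (replicate e) cs)"

lemma length_block_tuple [simp]: "length (block_tuple e cs) = length cs * e"
  by (induction cs) (auto simp: block_tuple_def)

lemma set_block_tuple: "0 < e \<Longrightarrow> set (block_tuple e cs) = set cs"
  by (auto simp: block_tuple_def)

lemma nth_block_tuple: "a < length cs \<Longrightarrow> k < e \<Longrightarrow> block_tuple e cs ! (a * e + k) = cs ! a"
proof (induction cs arbitrary: a)
  case (Cons c cs)
  then show ?case
    by (cases a) (auto simp: block_tuple_def nth_append)
qed simp

lemma doubled_list_triple:
  assumes "a < length cs" "b < length cs" "c < length cs" "a < b \<or> b < c"
  shows "\<exists>u v w. u < v \<and> v < w \<and> w < 2 * length cs \<and> (cs @ cs @ rest) ! u = cs ! a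
    \<and> (cs @ cs @ rest) ! v = cs ! b \<and> (cs @ cs @ rest) ! w = cs ! c"
proof (cases "a < b")
  case True
  with assms show ?thesis
    by (intro exI[of _ a] exI[of _ b] exI[of _ "length cs + c"]) (auto simp: nth_append)
next
  case False
  with assms show ?thesis
    by (intro exI[of _ a] exI[of _ "length cs + b"] exI[of _ "length cs + c"]) (auto simp: nth_append)
qed

context group
begin

lemma tuple_prod_block_tuple:
  "set cs \<subseteq> carrier G \<Longrightarrow> (\<And>c. c \<in> set cs \<Longrightarrow> c [^] e = \<one>) \<Longrightarrow> tuple_prod G (block_tuple e cs) = \<one>"
proof (induction cs)
  case (Cons c cs)
  then have "tuple_prod G (replicate e c @ block_tuple e cs) = \<one>"
    by (subst tuple_prod_append) (auto simp: block_tuple_def tuple_prod_replicate)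
  then show ?case
    by (simp add: block_tuple_def)
qed (simp add: block_tuple_def)

lemma stabilizer_transposes_blocks:
  assumes cs: "set cs \<subseteq> carrier G" and e: "0 < e" "t \<le> e"
    and uvw: "u < v" "v < w" "w < length cs"
    and conj: "cs ! w = inv (cs ! v [^] t) \<otimes> cs ! u \<otimes> cs ! v [^] t"
  shows "stabilizer_transposes G (length cs * e) (block_tuple e cs) (u * e) (w * e)"
proof -
  have gap: "a * e + e \<le> b * e" if "a < b" for a b
    using that mult_le_mono1[of "Suc a" b e] by simp
  have nth: "block_tuple e cs ! (a * e + k) = cs ! a" if "a < length cs" "k < e" for a k
    using that by (rule nth_block_tuple)
  show ?thesis
  proof (rule stabilizer_transposes_conj_by_block)
    show "set (block_tuple e cs) \<subseteq> carrier G"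
      using cs e by (simp add: set_block_tuple)
    show "u * e < v * e" "v * e + t \<le> w * e" "w * e < length cs * e"
      using uvw e gap[of v w] by auto
    show "cs ! v \<in> carrier G"
      using cs uvw by (auto dest: nth_mem)
    show "block_tuple e cs ! m = cs ! v" if "v * e \<le> m" "m < v * e + t" for m
      using nth[of v "m - v * e"] that uvw e by simp
    show "block_tuple e cs ! (w * e) = inv (cs ! v [^] t) \<otimes> block_tuple e cs ! (u * e) \<otimes> cs ! v [^] t"
      using nth[of w 0] nth[of u 0] uvw e conj by simp
  qed simp
qed

lemma stabilizer_transposes_doubled_block_tuple:
  fixes cs rest :: "'a list" and e :: nat
  defines "x \<equiv> block_tuple e (cs @ cs @ rest)"
  assumes carrier: "set (cs @ rest) \<subseteq> carrier G" and e: "0 < e" "t \<le> e"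
    and a: "a1 < length cs" "a2 < length cs" "a3 < length cs" "a1 < a2 \<or> a2 < a3"
    and conj: "cs ! a3 = inv (cs ! a2 [^] t) \<otimes> cs ! a1 \<otimes> cs ! a2 [^] t"
  shows "\<exists>p p'. x ! p = cs ! a1 \<and> x ! p' = cs ! a3 \<and> stabilizer_transposes G (length x) x p p'"
proof -
  obtain u v w where uvw: "u < v" "v < w" "w < 2 * length cs" and nth: "(cs @ cs @ rest) ! u = cs ! a1"
    "(cs @ cs @ rest) ! v = cs ! a2" "(cs @ cs @ rest) ! w = cs ! a3"
    using doubled_list_triple[OF a] by blast
  then have "stabilizer_transposes G (length (cs @ cs @ rest) * e) x (u * e) (w * e)"
    unfolding x_def using carrier e conj by (intro stabilizer_transposes_blocks) auto
  moreover have "x ! (u * e) = cs ! a1" "x ! (w * e) = cs ! a3"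
    using nth_block_tuple[of _ "cs @ cs @ rest" 0 e] uvw e nth by (simp_all add: x_def)
  ultimately show ?thesis
    by (auto simp: x_def)
qed

lemma conj_step_in_doubled_block_tuple:
  fixes cs rest :: "'a list" and e :: nat
  defines "x \<equiv> block_tuple e (cs @ cs @ rest)"
  assumes carrier: "set (cs @ rest) \<subseteq> carrier G" and e: "0 < e" "\<And>c. c \<in> set cs \<Longrightarrow> c [^] e = \<one>"
    and c: "c \<in> set cs" "d \<in> set cs" "inv d \<otimes> c \<otimes> d \<in> set cs"
  shows "\<exists>p p'. x ! p = c \<and> x ! p' = inv d \<otimes> c \<otimes> d \<and> stabilizer_transposes G (length x) x p p'"
proof -
  have nth: "x ! (a * e) = cs ! a" if "a < length cs" for a
    using nth_block_tuple[of a "cs @ cs @ rest" 0 e] that e by (simp add: x_def nth_append)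
  obtain k r l where kl: "k < length cs" "cs ! k = c" "r < length cs" "cs ! r = d"
    "l < length cs" "cs ! l = inv d \<otimes> c \<otimes> d"
    using c by (metis in_set_conv_nth)
  have dc: "d \<in> carrier G" "c \<in> carrier G"
    using c carrier by auto
  have "d [^] (e - 1) \<otimes> d = \<one>"
    using dc e c by (simp flip: nat_pow_Suc)
  then have d_inv: "d [^] (e - 1) = inv d"
    using dc by (simp add: inv_equality)
  consider "k < r \<or> r < l" | "l < r \<or> r < k" | "k = r" "r = l"
    by linarith
  then show ?thesis
  proof cases
    case 1
    then show ?thesis
      using stabilizer_transposes_doubled_block_tuple[OF carrier e(1), of 1 k r l] kl e dc
      by (simp add: x_def)
  next
    case 2
    have "c = inv (d [^] (e - 1)) \<otimes> (inv d \<otimes> c \<otimes> d) \<otimes> d [^] (e - 1)"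
      unfolding d_inv using dc by (simp add: m_assoc)
    then show ?thesis
      using stabilizer_transposes_doubled_block_tuple[OF carrier e(1), of "e - 1" l r k] 2 kl
      by (metis diff_le_self stabilizer_transposes_sym x_def)
  next
    case 3
    then have "inv d \<otimes> c \<otimes> d = c"
      using kl by simp
    moreover have "k * e < length x"
      using kl(1) e mult_less_mono1[of k "length cs" e] by (simp add: x_def)
    ultimately show ?thesis
      using nth kl stabilizer_transposes_refl by metis
  qed
qed

lemma double_card_conj_class_mult_ord_le:
  assumes fin: "finite (carrier G)" and a: "a \<in> carrier G" "a \<noteq> \<one>"
    and n: "0 < n" "(order G)\<^sup>2 dvd n"
  shows "2 * card (conj_class a) * ord a \<le> n"
proof -
  have "2 * card (conj_class a) * ord a \<le> 2 * order G"
    using card_conj_class_mult_ord_le[OF fin a(1)] by simp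
  also have "\<dots> \<le> order G * order G"
    using card_mono[OF fin, of "{\<one>, a}"] a by (simp add: order_def)
  also have "\<dots> \<le> n"
    using dvd_imp_le[OF n(2,1)] by (simp add: power2_eq_square)
  finally show ?thesis .
qed

lemma exists_Sur1_all_stabilizer_transposes:
  assumes fin: "finite (carrier G)" and a: "a \<in> carrier G" "a \<noteq> \<one>"
    and gen: "generate G (conj_class a) = carrier G"
    and n: "0 < n" "(order G)\<^sup>2 dvd n"
  shows "\<exists>x \<in> Sur1 G n. \<forall>i j. i < n \<longrightarrow> j < n \<longrightarrow> stabilizer_transposes G n x i j"
proof -
  define e where "e = ord a"
  obtain cs where cs: "set cs = conj_class a" "distinct cs"
    using finite_distinct_list finite_subset[OF conj_class_subset[OF a(1)] fin] by blast
  have e0: "0 < e"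
    using ord_ge_1[OF fin a(1)] by (simp add: e_def)
  have len: "2 * length cs * e \<le> n"
    using double_card_conj_class_mult_ord_le[OF fin a n] distinct_card[OF cs(2)] cs(1)
    by (simp add: e_def)
  have "order G dvd n"
    using n(2) by (simp add: power2_eq_square dvd_mult_left)
  with ord_dvd_group_order[OF a(1)] have "e dvd n"
    unfolding e_def by (rule dvd_trans)
  define K where "K = n div e - 2 * length cs"
  define x where "x = block_tuple e (cs @ cs @ replicate K a)"
  have a_class: "a \<in> conj_class a"
    using a(1) by (rule self_in_conj_class)
  have carrier: "set (cs @ replicate K a) \<subseteq> carrier G"
    using cs a conj_class_subset by auto
  have pow: "c [^] e = \<one>" if "c \<in> conj_class a" for c
    using pow_ord_conj_class a(1) that by (simp add: e_def)
  have lx: "length x = n"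
    using len e0 \<open>e dvd n\<close> by (simp add: x_def K_def less_eq_div_iff_mult_less_eq algebra_simps)
  have sx: "set x = conj_class a"
    unfolding x_def set_block_tuple[OF e0] using cs(1) a_class by (simp add: set_replicate_conv_if insert_absorb)
  have "tuple_prod G x = \<one>"
    unfolding x_def using carrier cs a_class pow by (intro tuple_prod_block_tuple) auto
  then have "x \<in> Sur1 G n"
    using lx sx gen conj_class_subset[OF a(1)] by (simp add: Sur1_def)
  moreover have "stabilizer_transposes G n x i j" if "i < n" "j < n" for i j
  proof (rule stabilizer_transposes_all_if_conj_steps[OF lx sx a(1) gen _ that])
    fix c d assume "c \<in> set x" "d \<in> set x"
    moreover have "inv d \<otimes> c \<otimes> d \<in> conj_class a"
      using conj_in_conj_class[OF a(1), of c "inv d"] calculation sx conj_class_subset[OF a(1)] by auto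
    ultimately show "\<exists>p p'. x ! p = c \<and> x ! p' = inv d \<otimes> c \<otimes> d \<and> stabilizer_transposes G n x p p'"
      using conj_step_in_doubled_block_tuple[OF carrier e0, of c d] pow cs sx lx
      by (simp add: x_def)
  qed
  ultimately show ?thesis by blast
qed

end

theorem corollary4p46:
  fixes G :: "('a, 'b) monoid_scheme"
  assumes "simple_group G" and "finite (carrier G)"
  shows "\<forall>n::nat. n > 0 \<and> (order G)^2 dvd n \<longrightarrow>
    (\<exists>s \<in> Sur1_quot G n. \<exists>w. braid_word_in n w \<and> braid_act_orbit G w s = s
        \<and> is_n_cycle n (braid_perm w))"
proof (intro allI impI)
  fix n :: nat
  assume "n > 0 \<and> (order G)^2 dvd n"
  then have n: "0 < n" "(order G)\<^sup>2 dvd n" by auto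
  interpret simple_group G by fact
  obtain a where a: "a \<in> carrier G" "a \<noteq> \<one>\<^bsub>G\<^esub>"
    using simple_not_triv one_closed by blast
  obtain x where x: "x \<in> Sur1 G n" and all: "\<forall>i j. i < n \<longrightarrow> j < n \<longrightarrow> stabilizer_transposes G n x i j"
    using exists_Sur1_all_stabilizer_transposes[OF assms(2) a generate_conj_class[OF a] n] by blast
  have "\<exists>w. braid_word_in n w \<and> braid_act G w x = x \<and> is_n_cycle n (braid_perm w)"
    using all by (intro braid_stabilizer_has_n_cycle[OF n(1)]) simp
  then obtain w where w: "braid_word_in n w" "braid_act G w x = x" "is_n_cycle n (braid_perm w)"
    by blast
  have "braid_act_orbit G w (conj_orbit G x) = conj_orbit G x"
    using x w braid_act_orbit_conj_orbit[OF is_group] by (auto simp: Sur1_def)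
  moreover have "conj_orbit G x \<in> Sur1_quot G n"
    using x by (simp add: Sur1_quot_def)
  ultimately show "\<exists>s \<in> Sur1_quot G n. \<exists>w. braid_word_in n w \<and> braid_act_orbit G w s = s
      \<and> is_n_cycle n (braid_perm w)"
    using w by blast
qed

end
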